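(* Let $a,b,c,d,P_{\max}>0$ and set $\alpha=d(1+bP_{\max})$. Consider the frontier curve $\Phi_2$, given as the graph of $$f(r_1)=\log_2\!\left(1+\frac{cP_{\max}}{1+\frac{d}{a}(1+bP_{\max})(2^{r_1}-1)}\right),\qquad r_1\ge 0 .$$ Let $P_1=\frac1a(1+bP_{\max})(2^{r_1}-1)$ be the corresponding power of user 1. Then $$\operatorname{sign}\big(f''(r_1)\big)=\operatorname{sign}\Big((\alpha+adP_1)^2-(a-\alpha)(a-\alpha+acP_{\max})\Big)=\operatorname{sign}(P_1-Q_1),$$ where the inflection threshold is $$Q_1=\frac{\Re\!\left(\sqrt{(a-\alpha)(a-\alpha+acP_{\max})}\right)-\alpha}{ad}.$$ In particular, $\Phi_2$ restricted to $P_1\in[0,P_{\max}]$ is concave if $Q_1\ge P_{\max}$ and convex if $Q_1\le 0$. If $0<Q_1<P_{\max}$, it is concave for $P_1\in[0,Q_1]$ and convex for $P_1\in[Q_1,P_{\max}]$.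
   Context: The channel power gains are normalized by the noise variance: $a$ (direct gain of user 1), $b$ (interference gain from transmitter 2 at receiver 1), $c$ (direct gain of user 2), $d$ (interference gain from transmitter 1 at receiver 2). The rates are $R_1(P_1,P_2)=\log_2\!\left(1+\frac{aP_1}{1+bP_2}\right)$ and $R_2(P_1,P_2)=\log_2\!\left(1+\frac{cP_2}{1+dP_1}\right)$. The curve $\Phi_2$ is the set of rate pairs obtained with $P_2=P_{\max}$ and $P_1$ ranging over $[0,P_{\max}]$. $\Re$ denotes the real part, and the square root of a negative number is purely imaginary. *)

theory Defs
  imports "HOL-Analysis.Analysis"
begin

definition alpha_par :: "real \<Rightarrow> real \<Rightarrow> real \<Rightarrow> real" where
  "alpha_par b d Pmax = d * (1 + b * Pmax)"

definition frontier_f :: "real \<Rightarrow> real \<Rightarrow> real \<Rightarrow> real \<Rightarrow> real \<Rightarrow> real \<Rightarrow> real" where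
  "frontier_f a b c d Pmax r1 =
     log 2 (1 + c * Pmax / (1 + (d / a) * (1 + b * Pmax) * (2 powr r1 - 1)))"

text \<open>Power of user 1 corresponding to rate r1 (with P2 = Pmax)\<close>
definition power1 :: "real \<Rightarrow> real \<Rightarrow> real \<Rightarrow> real \<Rightarrow> real" where
  "power1 a b Pmax r1 = (1 / a) * (1 + b * Pmax) * (2 powr r1 - 1)"

text \<open>Inflection threshold; Re of the complex square root (purely imaginary for negative radicand)\<close>
definition Q1 :: "real \<Rightarrow> real \<Rightarrow> real \<Rightarrow> real \<Rightarrow> real \<Rightarrow> real" where
  "Q1 a b c d Pmax =
     (Re (csqrt (complex_of_real ((a - alpha_par b d Pmax) * (a - alpha_par b d Pmax + a * c * Pmax))))
       - alpha_par b d Pmax) / (a * d)"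

end

theory Submission
  imports Defs
begin

(* Writing K = (d/a)(1 + b Pmax) and C = c Pmax, the frontier curve is
   g(r) = log2 (1 + C / D(r)) with D(r) = 1 + K (2^r - 1) > 0 for r >= 0.  Differentiating
   twice with x = 2^r gives
     g''(r) = C K x ln 2 (K^2 x^2 - (1 - K)(1 - K + C)) / (D (D + C))^2,
   so the sign of g'' is that of K^2 x^2 - (1-K)(1-K+C).  Multiplying by a^2 and using
   a K x = alpha + a d P1 turns this into the sign of y^2 - R, with y = alpha + a d P1 > 0
   and R = (a - alpha)(a - alpha + a c Pmax); for positive y that is the sign of
   y - Re (sqrt R), i.e. of P1 - Q1.  Since P1 is monotone in r, the regions where
   P1 <= Q1 (resp. P1 >= Q1) are intervals, on which g'' <= 0 (resp. >= 0), giving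
   concavity (resp. convexity). *)

definition curve_den :: "real \<Rightarrow> real \<Rightarrow> real" where
  "curve_den K r = 1 + K * (2 powr r - 1)"

definition curve :: "real \<Rightarrow> real \<Rightarrow> real \<Rightarrow> real" where
  "curve K C r = log 2 (1 + C / curve_den K r)"

definition curve' :: "real \<Rightarrow> real \<Rightarrow> real \<Rightarrow> real" where
  "curve' K C r = - C * K * 2 powr r / (curve_den K r * (curve_den K r + C))"

definition curve'' :: "real \<Rightarrow> real \<Rightarrow> real \<Rightarrow> real" where
  "curve'' K C r = C * K * 2 powr r * ln 2 * (K\<^sup>2 * (2 powr r)\<^sup>2 - (1 - K) * (1 - K + C))
                   / (curve_den K r * (curve_den K r + C))\<^sup>2"

lemma frontier_f_eq_curve:
  "frontier_f a b c d Pmax = curve (d / a * (1 + b * Pmax)) (c * Pmax)"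
  by (rule ext) (simp add: frontier_f_def curve_def curve_den_def)

lemma has_real_derivative_two_powr: "((\<lambda>r. 2 powr r) has_real_derivative ln 2 * 2 powr r) (at r)"
  unfolding powr_def by (auto intro!: derivative_eq_intros)

lemma curve_den_deriv:
  "(curve_den K has_real_derivative K * ln 2 * 2 powr r) (at r)"
  unfolding curve_den_def
  by (auto intro!: derivative_eq_intros has_real_derivative_two_powr)

(* The denominator is at least 1 on r >= 0 when K >= 0, which keeps all quotients defined. *)
lemma curve_den_ge_1: "K \<ge> 0 \<Longrightarrow> r \<ge> 0 \<Longrightarrow> curve_den K r \<ge> 1"
  unfolding curve_den_def by (simp add: ge_one_powr_ge_zero)

(* g' = - C K x / (D (D + C)) wherever D > 0 and D + C > 0 (the factor ln 2 cancels). *)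
lemma curve_deriv:
  assumes "curve_den K r > 0" "curve_den K r + C > 0"
  shows "(curve K C has_real_derivative curve' K C r) (at r)"
proof -
  let ?D = "curve_den K r" and ?x = "2 powr r"
  have "1 + C / ?D > 0"
    using assms by (simp add: field_simps)
  then have chain_rule: "(curve K C has_real_derivative
          1 / (ln 2 * (1 + C / ?D)) * (- C * (K * ln 2 * ?x) / (?D * ?D))) (at r)"
    unfolding curve_def using assms
    by (auto intro!: derivative_eq_intros curve_den_deriv)
  have "(1 + C / ?D) * (?D * ?D) = ?D * (?D + C)"
    using assms by (simp add: field_simps)
  then have "1 / (ln 2 * (1 + C / ?D)) * (- C * (K * ln 2 * ?x) / (?D * ?D)) = curve' K C r"
    unfolding curve'_def by (simp add: mult.assoc)
  with chain_rule show ?thesis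
    by simp
qed

(* The numerator of curve'' after the quotient rule, expressed through x = 2^r only. *)
lemma curve_den_identity:
  "K * 2 powr r * (2 * curve_den K r + C) - curve_den K r * (curve_den K r + C)
     = K\<^sup>2 * (2 powr r)\<^sup>2 - (1 - K) * (1 - K + C)"
  unfolding curve_den_def by (simp add: algebra_simps power2_eq_square)

lemma curve'_deriv:
  assumes "curve_den K r > 0" "curve_den K r + C > 0"
  shows "(curve' K C has_real_derivative curve'' K C r) (at r)"
  unfolding curve'_def
proof (rule derivative_eq_intros refl curve_den_deriv has_real_derivative_two_powr)+
  let ?D = "curve_den K r" and ?x = "2 powr r"
  show "?D * (?D + C) \<noteq> 0"
    using assms by simp
  have "ln 2 * ?x * (- C * K) * (?D * (?D + C))
            - (- C * K * ?x) * (K * ln 2 * ?x * (?D + C) + (K * ln 2 * ?x + 0) * ?D)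
      = C * K * ?x * ln 2 * (K * ?x * (2 * ?D + C) - ?D * (?D + C))"
    by (simp add: algebra_simps)
  then show "((0 * ?x + 1 * ln 2 * ?x * (- C * K)) * (?D * (?D + C))
            - (- C * K * ?x) * (K * ln 2 * ?x * (?D + C) + (K * ln 2 * ?x + 0) * ?D))
          / (?D * (?D + C) * (?D * (?D + C))) = curve'' K C r"
    unfolding curve''_def curve_den_identity[symmetric] by (simp add: power2_eq_square)
qed

(* Where the denominators are positive (an open condition), deriv (deriv curve) is curve''. *)
lemma deriv_deriv_curve:
  assumes "curve_den K r > 0" "curve_den K r + C > 0"
  shows "deriv (deriv (curve K C)) r = curve'' K C r"
proof -
  define S where "S = {s. 0 < curve_den K s} \<inter> {s. 0 < curve_den K s + C}"
  have "continuous_on UNIV (curve_den K)"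
    using curve_den_deriv DERIV_isCont continuous_at_imp_continuous_on by blast
  then have "open S"
    unfolding S_def by (intro open_Int open_Collect_less continuous_on_const continuous_on_add)
  moreover have "r \<in> S"
    using assms by (simp add: S_def)
  moreover have "curve' K C s = deriv (curve K C) s" if "s \<in> S" for s
    using that by (simp add: S_def DERIV_imp_deriv[OF curve_deriv])
  ultimately have "(deriv (curve K C) has_real_derivative curve'' K C r) (at r)"
    by (rule has_field_derivative_transform_within_open[OF curve'_deriv[OF assms]])
  then show ?thesis
    by (rule DERIV_imp_deriv)
qed

lemma sgn_curve'':
  assumes "C * K > 0" "curve_den K r > 0" "curve_den K r + C > 0"
  shows "sgn (curve'' K C r) = sgn (K\<^sup>2 * (2 powr r)\<^sup>2 - (1 - K) * (1 - K + C))"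
proof -
  let ?q = "K\<^sup>2 * (2 powr r)\<^sup>2 - (1 - K) * (1 - K + C)"
  have "curve'' K C r = (C * K * 2 powr r * ln 2 / (curve_den K r * (curve_den K r + C))\<^sup>2) * ?q"
    unfolding curve''_def by simp
  moreover have "C * K * 2 powr r * ln 2 / (curve_den K r * (curve_den K r + C))\<^sup>2 > 0"
    using assms by simp
  ultimately show ?thesis
    by (simp only: sgn_mult sgn_pos mult_1)
qed

lemma curve_concave_on:
  assumes "K \<ge> 0" "C \<ge> 0" "convex S" "S \<subseteq> {0..}" "\<And>r. r \<in> S \<Longrightarrow> curve'' K C r \<le> 0"
  shows "concave_on S (curve K C)"
proof (rule f''_le0_imp_concave[where f' = "curve' K C" and f'' = "curve'' K C"])
  have "curve_den K r > 0" "curve_den K r + C > 0" if "r \<in> S" for r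
    using curve_den_ge_1[of K r] assms that by auto
  then show "\<And>r. r \<in> S \<Longrightarrow> (curve K C has_real_derivative curve' K C r) (at r)"
    and "\<And>r. r \<in> S \<Longrightarrow> (curve' K C has_real_derivative curve'' K C r) (at r)"
    by (simp_all add: curve_deriv curve'_deriv)
qed (use assms in auto)

lemma curve_convex_on:
  assumes "K \<ge> 0" "C \<ge> 0" "convex S" "S \<subseteq> {0..}" "\<And>r. r \<in> S \<Longrightarrow> curve'' K C r \<ge> 0"
  shows "convex_on S (curve K C)"
proof (rule f''_ge0_imp_convex[where f' = "curve' K C" and f'' = "curve'' K C"])
  have "curve_den K r > 0" "curve_den K r + C > 0" if "r \<in> S" for r
    using curve_den_ge_1[of K r] assms that by auto
  then show "\<And>r. r \<in> S \<Longrightarrow> (curve K C has_real_derivative curve' K C r) (at r)"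
    and "\<And>r. r \<in> S \<Longrightarrow> (curve' K C has_real_derivative curve'' K C r) (at r)"
    by (simp_all add: curve_deriv curve'_deriv)
qed (use assms in auto)

(* For y > 0, comparing y^2 with R is comparing y with Re (sqrt R); for R < 0 both
   differences are positive since the principal square root is then purely imaginary. *)
lemma sgn_square_minus_eq_sgn_minus_Re_csqrt:
  fixes y R :: real
  assumes "y > 0"
  shows "sgn (y\<^sup>2 - R) = sgn (y - Re (csqrt (complex_of_real R)))"
proof (cases "R \<ge> 0")
  case True
  then have "Re (csqrt (complex_of_real R)) = sqrt R"
    by (simp add: csqrt_of_real)
  moreover have "y\<^sup>2 - R = (y - sqrt R) * (y + sqrt R)"
    using True by (simp add: algebra_simps power2_eq_square)
  moreover have "y + sqrt R > 0"
    using assms True by (simp add: add_pos_nonneg)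
  ultimately show ?thesis
    by (simp add: sgn_mult)
next
  case False
  then have "Re (csqrt (complex_of_real R)) = 0"
    by simp
  moreover have "y\<^sup>2 - R > 0"
    using False zero_le_power2[of y] by linarith
  ultimately show ?thesis
    using assms by simp
qed

lemma alpha_plus_power1:
  assumes "a > 0"
  shows "alpha_par b d P + a * d * power1 a b P r = a * (d / a * (1 + b * P)) * 2 powr r"
  using assms unfolding alpha_par_def power1_def by (simp add: algebra_simps)

lemma mono_power1:
  assumes "a > 0" "b > 0" "P > 0"
  shows "mono (power1 a b P)"
  unfolding power1_def using assms
  by (intro monoI mult_left_mono diff_right_mono powr_mono) (auto simp: add_pos_pos)

lemma power1_nonneg:
  assumes "a > 0" "b > 0" "P > 0" "r \<ge> 0"
  shows "power1 a b P r \<ge> 0"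
  using monoD[OF mono_power1[OF assms(1-3)] assms(4)] by (simp add: power1_def)

lemma convex_sublevel_mono:
  fixes p :: "real \<Rightarrow> real"
  assumes "mono p"
  shows "convex {r. 0 \<le> r \<and> p r \<le> hi}"
  unfolding is_interval_convex_1[symmetric] is_interval_1
proof (clarify)
  fix u v x assume "0 \<le> u" "p v \<le> hi" "u \<le> x" "x \<le> v"
  then show "0 \<le> x \<and> p x \<le> hi"
    using monoD[OF assms, of x v] by simp
qed

lemma convex_band_mono:
  fixes p :: "real \<Rightarrow> real"
  assumes "mono p"
  shows "convex {r. 0 \<le> r \<and> lo \<le> p r \<and> p r \<le> hi}"
  unfolding is_interval_convex_1[symmetric] is_interval_1
proof (clarify)
  fix u v x assume "0 \<le> u" "lo \<le> p u" "p v \<le> hi" "u \<le> x" "x \<le> v"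
  then show "0 \<le> x \<and> lo \<le> p x \<and> p x \<le> hi"
    using monoD[OF assms, of u x] monoD[OF assms, of x v] by simp
qed

lemma sgn_frontier_second_derivative:
  fixes a b c d P r :: real
  assumes "a > 0" "b > 0" "c > 0" "d > 0" "P > 0" "r \<ge> 0"
  shows "sgn (curve'' (d / a * (1 + b * P)) (c * P) r)
       = sgn ((alpha_par b d P + a * d * power1 a b P r)\<^sup>2
              - (a - alpha_par b d P) * (a - alpha_par b d P + a * c * P))"
proof -
  define K where "K = d / a * (1 + b * P)"
  define C where "C = c * P"
  define x where "x = 2 powr r"
  have "K > 0" "C > 0"
    using assms by (simp_all add: K_def C_def add_pos_pos)
  then have den: "curve_den K r > 0" "curve_den K r + C > 0"
    using curve_den_ge_1[of K r] assms(6) by auto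
  have y: "alpha_par b d P + a * d * power1 a b P r = a * K * x"
    using alpha_plus_power1[OF assms(1)] by (simp add: K_def x_def)
  have alpha: "alpha_par b d P = a * K"
    using assms(1) by (simp add: K_def alpha_par_def)
  have "sgn (curve'' K C r) = sgn (K\<^sup>2 * x\<^sup>2 - (1 - K) * (1 - K + C))"
    unfolding x_def using \<open>K > 0\<close> \<open>C > 0\<close> by (intro sgn_curve'' den) simp
  also have "\<dots> = sgn (a\<^sup>2 * (K\<^sup>2 * x\<^sup>2 - (1 - K) * (1 - K + C)))"
    using assms(1) by (simp add: sgn_mult)
  also have "a\<^sup>2 * (K\<^sup>2 * x\<^sup>2 - (1 - K) * (1 - K + C))
      = (a * K * x)\<^sup>2 - (a - a * K) * (a - a * K + a * C)"
    by (simp add: algebra_simps power2_eq_square)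
  finally show ?thesis
    unfolding y unfolding alpha by (simp only: K_def C_def mult.assoc)
qed

lemma sgn_discriminant_eq_sgn_minus_Q1:
  fixes a b c d P r :: real
  assumes "a > 0" "b > 0" "d > 0" "P > 0"
  shows "sgn ((alpha_par b d P + a * d * power1 a b P r)\<^sup>2
              - (a - alpha_par b d P) * (a - alpha_par b d P + a * c * P))
       = sgn (power1 a b P r - Q1 a b c d P)"
proof -
  define y where "y = alpha_par b d P + a * d * power1 a b P r"
  define R where "R = (a - alpha_par b d P) * (a - alpha_par b d P + a * c * P)"
  have "y > 0"
    unfolding y_def alpha_plus_power1[OF assms(1)] using assms by (simp add: add_pos_pos)
  have "power1 a b P r - Q1 a b c d P = (y - Re (csqrt (complex_of_real R))) / (a * d)"
    unfolding y_def R_def Q1_def using assms by (simp add: field_simps)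
  then have "sgn (y - Re (csqrt (complex_of_real R))) = sgn (power1 a b P r - Q1 a b c d P)"
    using assms by simp
  with sgn_square_minus_eq_sgn_minus_Re_csqrt[OF \<open>y > 0\<close>]
  have "sgn (y\<^sup>2 - R) = sgn (power1 a b P r - Q1 a b c d P)"
    by (rule trans)
  then show ?thesis
    by (simp only: y_def R_def)
qed

lemma sgn_curve''_frontier:
  fixes a b c d P r :: real
  assumes "a > 0" "b > 0" "c > 0" "d > 0" "P > 0" "r \<ge> 0"
  shows "sgn (curve'' (d / a * (1 + b * P)) (c * P) r) = sgn (power1 a b P r - Q1 a b c d P)"
  using sgn_frontier_second_derivative[OF assms] sgn_discriminant_eq_sgn_minus_Q1[OF assms(1,2,4,5)]
  by simp

lemma deriv_deriv_frontier:
  fixes a b c d P r :: real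
  assumes "a > 0" "b > 0" "c > 0" "d > 0" "P > 0" "r \<ge> 0"
  shows "deriv (deriv (frontier_f a b c d P)) r = curve'' (d / a * (1 + b * P)) (c * P) r"
  unfolding frontier_f_eq_curve
proof (rule deriv_deriv_curve)
  have "curve_den (d / a * (1 + b * P)) r \<ge> 1"
    using assms by (intro curve_den_ge_1) (simp_all add: add_pos_pos)
  moreover have "c * P > 0"
    using assms by simp
  ultimately show "curve_den (d / a * (1 + b * P)) r > 0"
    "curve_den (d / a * (1 + b * P)) r + c * P > 0"
    by auto
qed

lemma frontier_concave_on:
  fixes a b c d P :: real
  assumes "a > 0" "b > 0" "c > 0" "d > 0" "P > 0"
    and "convex S" "S \<subseteq> {0..}" "\<And>r. r \<in> S \<Longrightarrow> power1 a b P r \<le> Q1 a b c d P"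
  shows "concave_on S (frontier_f a b c d P)"
  unfolding frontier_f_eq_curve
proof (rule curve_concave_on)
  fix r assume "r \<in> S"
  then have "r \<ge> 0" "power1 a b P r \<le> Q1 a b c d P"
    using assms(7,8) by auto
  then have "sgn (curve'' (d / a * (1 + b * P)) (c * P) r) \<le> 0"
    using sgn_curve''_frontier[OF assms(1-5)] by simp
  then show "curve'' (d / a * (1 + b * P)) (c * P) r \<le> 0"
    by simp
qed (use assms in \<open>auto simp: add_pos_pos\<close>)

lemma frontier_convex_on:
  fixes a b c d P :: real
  assumes "a > 0" "b > 0" "c > 0" "d > 0" "P > 0"
    and "convex S" "S \<subseteq> {0..}" "\<And>r. r \<in> S \<Longrightarrow> Q1 a b c d P \<le> power1 a b P r"
  shows "convex_on S (frontier_f a b c d P)"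
  unfolding frontier_f_eq_curve
proof (rule curve_convex_on)
  fix r assume "r \<in> S"
  then have "r \<ge> 0" "Q1 a b c d P \<le> power1 a b P r"
    using assms(7,8) by auto
  then have "sgn (curve'' (d / a * (1 + b * P)) (c * P) r) \<ge> 0"
    using sgn_curve''_frontier[OF assms(1-5)] by simp
  then show "curve'' (d / a * (1 + b * P)) (c * P) r \<ge> 0"
    by simp
qed (use assms in \<open>auto simp: add_pos_pos\<close>)

theorem mainTheorem6:
  fixes a b c d Pmax :: real
  assumes "a > 0" and "b > 0" and "c > 0" and "d > 0" and "Pmax > 0"
  shows
   "(\<forall>r1 \<ge> 0.
       sgn (deriv (deriv (frontier_f a b c d Pmax)) r1)
         = sgn ((alpha_par b d Pmax + a * d * power1 a b Pmax r1)\<^sup>2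
                - (a - alpha_par b d Pmax) * (a - alpha_par b d Pmax + a * c * Pmax))
     \<and> sgn ((alpha_par b d Pmax + a * d * power1 a b Pmax r1)\<^sup>2
                - (a - alpha_par b d Pmax) * (a - alpha_par b d Pmax + a * c * Pmax))
         = sgn (power1 a b Pmax r1 - Q1 a b c d Pmax))
    \<and> (Q1 a b c d Pmax \<ge> Pmax \<longrightarrow>
         concave_on {r1. 0 \<le> r1 \<and> power1 a b Pmax r1 \<le> Pmax} (frontier_f a b c d Pmax))
    \<and> (Q1 a b c d Pmax \<le> 0 \<longrightarrow>
         convex_on {r1. 0 \<le> r1 \<and> power1 a b Pmax r1 \<le> Pmax} (frontier_f a b c d Pmax))
    \<and> (0 < Q1 a b c d Pmax \<and> Q1 a b c d Pmax < Pmax \<longrightarrow>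
         concave_on {r1. 0 \<le> r1 \<and> power1 a b Pmax r1 \<le> Q1 a b c d Pmax} (frontier_f a b c d Pmax)
       \<and> convex_on {r1. 0 \<le> r1 \<and> Q1 a b c d Pmax \<le> power1 a b Pmax r1 \<and> power1 a b Pmax r1 \<le> Pmax}
           (frontier_f a b c d Pmax))"
proof -
  let ?P1 = "power1 a b Pmax" and ?Q1 = "Q1 a b c d Pmax"
  have mono: "mono ?P1"
    using assms by (intro mono_power1)
  (* The three shape statements: sublevel and band sets of the monotone P1 are intervals,
     and P1 >= 0 >= Q1 in the case Q1 <= 0. *)
  have "concave_on {r. 0 \<le> r \<and> ?P1 r \<le> hi} (frontier_f a b c d Pmax)" if "hi \<le> ?Q1" for hi
    using that by (intro frontier_concave_on assms convex_sublevel_mono[OF mono]) auto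
  moreover have "convex_on {r. 0 \<le> r \<and> ?P1 r \<le> Pmax} (frontier_f a b c d Pmax)" if "?Q1 \<le> 0"
    using that power1_nonneg[OF assms(1,2,5)]
    by (intro frontier_convex_on assms convex_sublevel_mono[OF mono]) force+
  moreover have "convex_on {r. 0 \<le> r \<and> ?Q1 \<le> ?P1 r \<and> ?P1 r \<le> Pmax} (frontier_f a b c d Pmax)"
    by (intro frontier_convex_on assms convex_band_mono[OF mono]) auto
  ultimately show ?thesis
    using deriv_deriv_frontier[OF assms] sgn_frontier_second_derivative[OF assms]
          sgn_discriminant_eq_sgn_minus_Q1[OF assms(1,2,4,5)]
    by auto
qed

end
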